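(* Let $t$ be a regular term and $r$ an arbitrary term in the language of strong quasi-Wajsberg* algebras. Then the equation $(r\to r)\to t\approx t$ is valid in all strong quasi-Wajsberg* algebras.
   Context: A quasi-Wajsberg* algebra is an algebra $\langle W;\to,\neg,{}^+,{}^-,1\rangle$ of type $\langle 2,1,1,1,0\rangle$ (${}^+,{}^-$ bind more tightly than $\neg$, which binds more tightly than $\to$) such that for all $x,y,z$: (1) $x\to y=\neg y\to\neg x$; (2) $(x\to 1)\to((y\to 1)\to z)=(y\to 1)\to((x\to 1)\to z)$; (3) $(1\to x)\to 1=1$; (4) $(z\to z)\to(x\to y)=x\to y$; (5) $(1\to 1)\to x^{+}=((1\to 1)\to x)^{+}=(x\to 1)\to 1$ and $(1\to 1)\to x^{-}=((1\to 1)\to x)^{-}=(x\to\neg 1)\to\neg 1$; (6) $x\to y=(y^{+}\to x^{-})\to(x^{+}\to y^{-})$; (7) $\neg(x\to y)=y\to x$; (8) $\neg\neg x=x$; (9) $(x\to(\neg x\to y))^{+}=x^{+}\to(\neg x^{+}\to y^{+})$; (10) $x\vee y=y\vee x$; (11) $x\vee(y\vee z)=(x\vee y)\vee z$; (12) $x\to(y\vee z)=(x\to y)\vee(x\to z)$; where $x\vee y:=((x^{+}\to y^{+})^{+}\to(\neg x)^{-})\to((y^{-}\to x^{-})^{-}\to x^{-})$. A strong quasi-Wajsberg* algebra is a quasi-Wajsberg* algebra satisfying $x^+=(1\to 1)\to x^+$ and $x^-=(1\to 1)\to x^-$. Terms in the language of strong quasi-Wajsberg* algebras are built from variables and the constant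 $1$ using $\to,\neg,{}^+,{}^-$. A term is regular if it contains an occurrence of $\to$ or of the constant $1$. *)

theory Defs
  imports Main
begin

text \<open>An algebra (W; imp, neg, pl, mi, one) of type (2,1,1,1,0), with carrier the whole
  type 'a.  imp x y is x \<rightarrow> y, neg x is \<not>x, pl x is x^+, mi x is x^-.\<close>

definition qw_join :: "('a \<Rightarrow> 'a \<Rightarrow> 'a) \<Rightarrow> ('a \<Rightarrow> 'a) \<Rightarrow> ('a \<Rightarrow> 'a) \<Rightarrow> ('a \<Rightarrow> 'a) \<Rightarrow> 'a \<Rightarrow> 'a \<Rightarrow> 'a"
  where "qw_join imp neg pl mi x y =
    imp (imp (pl (imp (pl x) (pl y))) (mi (neg x)))
        (imp (mi (imp (mi y) (mi x))) (mi x))"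

definition quasi_wajsberg_star ::
  "('a \<Rightarrow> 'a \<Rightarrow> 'a) \<Rightarrow> ('a \<Rightarrow> 'a) \<Rightarrow> ('a \<Rightarrow> 'a) \<Rightarrow> ('a \<Rightarrow> 'a) \<Rightarrow> 'a \<Rightarrow> bool"
  where "quasi_wajsberg_star imp neg pl mi one \<longleftrightarrow>
    (\<forall>x y. imp x y = imp (neg y) (neg x)) \<and>
    (\<forall>x y z. imp (imp x one) (imp (imp y one) z) = imp (imp y one) (imp (imp x one) z)) \<and>
    (\<forall>x. imp (imp one x) one = one) \<and>
    (\<forall>x y z. imp (imp z z) (imp x y) = imp x y) \<and>
    (\<forall>x. imp (imp one one) (pl x) = pl (imp (imp one one) x) \<and>
         pl (imp (imp one one) x) = imp (imp x one) one) \<and>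
    (\<forall>x. imp (imp one one) (mi x) = mi (imp (imp one one) x) \<and>
         mi (imp (imp one one) x) = imp (imp x (neg one)) (neg one)) \<and>
    (\<forall>x y. imp x y = imp (imp (pl y) (mi x)) (imp (pl x) (mi y))) \<and>
    (\<forall>x y. neg (imp x y) = imp y x) \<and>
    (\<forall>x. neg (neg x) = x) \<and>
    (\<forall>x y. pl (imp x (imp (neg x) y)) = imp (pl x) (imp (neg (pl x)) (pl y))) \<and>
    (\<forall>x y. qw_join imp neg pl mi x y = qw_join imp neg pl mi y x) \<and>
    (\<forall>x y z. qw_join imp neg pl mi x (qw_join imp neg pl mi y z)
             = qw_join imp neg pl mi (qw_join imp neg pl mi x y) z) \<and>
    (\<forall>x y z. imp x (qw_join imp neg pl mi y z)
             = qw_join imp neg pl mi (imp x y) (imp x z))"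

definition strong_quasi_wajsberg_star ::
  "('a \<Rightarrow> 'a \<Rightarrow> 'a) \<Rightarrow> ('a \<Rightarrow> 'a) \<Rightarrow> ('a \<Rightarrow> 'a) \<Rightarrow> ('a \<Rightarrow> 'a) \<Rightarrow> 'a \<Rightarrow> bool"
  where "strong_quasi_wajsberg_star imp neg pl mi one \<longleftrightarrow>
    quasi_wajsberg_star imp neg pl mi one \<and>
    (\<forall>x. pl x = imp (imp one one) (pl x)) \<and>
    (\<forall>x. mi x = imp (imp one one) (mi x))"

datatype qterm = QVar nat | QOne | QImp qterm qterm | QNeg qterm | QPlus qterm | QMinus qterm

primrec qeval :: "('a \<Rightarrow> 'a \<Rightarrow> 'a) \<Rightarrow> ('a \<Rightarrow> 'a) \<Rightarrow> ('a \<Rightarrow> 'a) \<Rightarrow> ('a \<Rightarrow> 'a) \<Rightarrow> 'a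
                  \<Rightarrow> (nat \<Rightarrow> 'a) \<Rightarrow> qterm \<Rightarrow> 'a" where
  "qeval imp neg pl mi one v (QVar n) = v n"
| "qeval imp neg pl mi one v QOne = one"
| "qeval imp neg pl mi one v (QImp s t) = imp (qeval imp neg pl mi one v s) (qeval imp neg pl mi one v t)"
| "qeval imp neg pl mi one v (QNeg s) = neg (qeval imp neg pl mi one v s)"
| "qeval imp neg pl mi one v (QPlus s) = pl (qeval imp neg pl mi one v s)"
| "qeval imp neg pl mi one v (QMinus s) = mi (qeval imp neg pl mi one v s)"

primrec regular :: "qterm \<Rightarrow> bool" where
  "regular (QVar n) = False"
| "regular QOne = True"
| "regular (QImp s t) = True"
| "regular (QNeg s) = regular s"
| "regular (QPlus s) = regular s"
| "regular (QMinus s) = regular s"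

end

theory Submission
  imports Defs
begin

text \<open>Every value of a regular term is a fixed point of \<open>u \<mapsto> (a \<rightarrow> a) \<rightarrow> u\<close>:
  implications are fixed by axiom (4), the constant 1 because axiom (3) writes it as
  the implication \<open>(1 \<rightarrow> 1) \<rightarrow> 1\<close>, the values \<open>x\<^sup>+\<close> and \<open>x\<^sup>-\<close> because the strong
  axioms write them as implications, and fixed points are closed under \<open>\<not>\<close> by
  contraposition (1) together with (7) and (8).\<close>

locale quasi_wajsberg_star_algebra =
  fixes imp :: "'a \<Rightarrow> 'a \<Rightarrow> 'a" and neg pl mi :: "'a \<Rightarrow> 'a" and one :: 'a
  assumes quasi_wajsberg_star: "quasi_wajsberg_star imp neg pl mi one"
begin

lemma imp_contrapos: "imp x y = imp (neg y) (neg x)"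
  and imp_one_imp_one: "imp (imp one x) one = one"
  and imp_self_imp_imp: "imp (imp z z) (imp x y) = imp x y"
  and neg_imp: "neg (imp x y) = imp y x"
  and neg_neg: "neg (neg x) = x"
  using quasi_wajsberg_star unfolding quasi_wajsberg_star_def by (auto simp only: conj_assoc)

lemma imp_self_imp_one: "imp (imp a a) one = one"
proof -
  have "imp (imp a a) one = imp (imp a a) (imp (imp one one) one)"
    by (simp only: imp_one_imp_one)
  also have "\<dots> = imp (imp one one) one"
    by (rule imp_self_imp_imp)
  also have "\<dots> = one"
    by (rule imp_one_imp_one)
  finally show ?thesis .
qed

lemma imp_self_imp_neg:
  assumes "imp (imp a a) x = x"
  shows "imp (imp a a) (neg x) = neg x"
proof -
  have "imp (imp a a) (neg x) = imp x (imp a a)"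
    by (simp only: imp_contrapos [of "imp a a"] neg_neg neg_imp)
  also have "\<dots> = neg (imp (imp a a) x)"
    by (simp only: neg_imp)
  finally show ?thesis
    using assms by simp
qed

end

locale strong_quasi_wajsberg_star_algebra =
  fixes imp :: "'a \<Rightarrow> 'a \<Rightarrow> 'a" and neg pl mi :: "'a \<Rightarrow> 'a" and one :: 'a
  assumes strong_quasi_wajsberg_star: "strong_quasi_wajsberg_star imp neg pl mi one"
begin

sublocale quasi_wajsberg_star_algebra
  using strong_quasi_wajsberg_star
  by unfold_locales (simp add: strong_quasi_wajsberg_star_def)

lemma pl_eq_imp: "pl x = imp (imp one one) (pl x)"
  and mi_eq_imp: "mi x = imp (imp one one) (mi x)"
  using strong_quasi_wajsberg_star unfolding strong_quasi_wajsberg_star_def by (auto simp only: conj_assoc)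

lemma imp_self_imp_pl: "imp (imp a a) (pl x) = pl x"
  by (metis pl_eq_imp imp_self_imp_imp)

lemma imp_self_imp_mi: "imp (imp a a) (mi x) = mi x"
  by (metis mi_eq_imp imp_self_imp_imp)

lemma imp_self_imp_qeval_regular:
  assumes "regular t"
  shows "imp (imp a a) (qeval imp neg pl mi one v t) = qeval imp neg pl mi one v t"
  using assms
  by (induction t)
    (simp_all add: imp_self_imp_one imp_self_imp_imp imp_self_imp_neg
      imp_self_imp_pl imp_self_imp_mi)

end

theorem proposition3p6:
  fixes r t :: qterm
  assumes "regular t"
  shows "\<forall>imp neg pl mi one. strong_quasi_wajsberg_star imp neg pl mi (one::'a) \<longrightarrow>
           (\<forall>v. qeval imp neg pl mi one v (QImp (QImp r r) t) = qeval imp neg pl mi one v t)"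
proof (intro allI impI)
  fix imp neg pl mi and one :: 'a and v
  assume "strong_quasi_wajsberg_star imp neg pl mi one"
  then interpret strong_quasi_wajsberg_star_algebra imp neg pl mi one
    by unfold_locales
  show "qeval imp neg pl mi one v (QImp (QImp r r) t) = qeval imp neg pl mi one v t"
    using imp_self_imp_qeval_regular [OF assms] by simp
qed

end
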